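(* For relatively prime integers $r, s$ put $u = r^2 + s^2$, $v = 2r^2 - s^2$, $A = uv(u^2-v^2)$, and $\mathcal{S} = \{\pm u(u+v),\ \pm u(u-v),\ \pm v(u+v),\ \pm v(u-v)\}$. Then for all but finitely many pairs $(r,s)$ of relatively prime integers with $r\neq 0$, no element of $\mathcal{S}$ represents the same class in $\mathbb{Q}^\times/(\mathbb{Q}^\times)^2$ as any of $1, -1, A, -A$.
   Context: $\mathbb{Q}^\times/(\mathbb{Q}^\times)^2$ denotes the group of nonzero rationals modulo nonzero squares; two nonzero rationals represent the same class iff their quotient is a square of a rational. *)

theory Defs
  imports Complex_Main "HOL-Computational_Algebra.Primes"
begin

definition same_sq_class :: "rat \<Rightarrow> rat \<Rightarrow> bool" where
  "same_sq_class x y \<longleftrightarrow> x \<noteq> 0 \<and> y \<noteq> 0 \<and> (\<exists>q::rat. x / y = q ^ 2)"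

definition u_of :: "int \<Rightarrow> int \<Rightarrow> int" where
  "u_of r s = r^2 + s^2"

definition v_of :: "int \<Rightarrow> int \<Rightarrow> int" where
  "v_of r s = 2 * r^2 - s^2"

definition A_of :: "int \<Rightarrow> int \<Rightarrow> int" where
  "A_of r s = u_of r s * v_of r s * ((u_of r s)^2 - (v_of r s)^2)"

definition S_of :: "int \<Rightarrow> int \<Rightarrow> int set" where
  "S_of r s = (let u = u_of r s; v = v_of r s in
     {u*(u+v), -(u*(u+v)), u*(u-v), -(u*(u-v)),
      v*(u+v), -(v*(u+v)), v*(u-v), -(v*(u-v))})"

end

(*
  Put u = r^2 + s^2, v = 2 r^2 - s^2 and w = u - v = 2 s^2 - r^2, so that u + v = 3 r^2
  and A = 3 r^2 u v w. Modulo squares, every product of an element of S with 1 or A is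
  one of 3u, 3v, uw, vw up to sign. For coprime r, s none of u, v, w is divisible by 3,
  so 3u and 3v are never squares up to sign, while u, w and v, w are coprime, so that a
  square class coincidence makes two of |u|, |v|, |w| squares. Congruences modulo 8 rule
  out all sign patterns but two, which are the systems

    r^2 + s^2 = a^2,  r^2 - 2 s^2 = b^2     and     2 r^2 - s^2 = a^2,  2 s^2 - r^2 = b^2.

  The first has no solution with s nonzero, by Fermat descent; the second forces r^2 = s^2,
  because the four number lemma reduces it to Euler's theorem that x^4 - x^2 y^2 + y^4 is
  a square only if x y = 0 or x^2 = y^2, again proved by descent. So the exceptional
  coprime pairs are among (+-1, 0) and (+-1, +-1).
*)
theory Submission
  imports Defs "HOL-Number_Theory.Cong" "HOL-Computational_Algebra.Nth_Powers"
begin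

lemma coprimeI_prime_dvd:
  fixes a b :: int
  assumes "\<And>p. prime p \<Longrightarrow> p dvd a \<Longrightarrow> p dvd b \<Longrightarrow> False"
  shows "coprime a b"
proof (rule ccontr)
  assume "\<not> coprime a b"
  then have "\<bar>gcd a b\<bar> \<noteq> 1" by (simp add: coprime_iff_gcd_eq_1)
  then obtain p where "prime p" "p dvd gcd a b" by (rule prime_factor_int)
  then show False using assms by auto
qed

lemma coprime_no_common_prime_divisor:
  fixes p a b :: int
  assumes "coprime a b" "prime p" "p dvd a" "p dvd b"
  shows False
  using assms by (meson coprime_common_divisor not_prime_unit)

lemma coprime_not_both_even:
  fixes r s :: int
  assumes "coprime r s"
  shows "\<not> (even r \<and> even s)"
  using assms coprime_common_divisor_int[of r s 2] by auto

lemma prime_dvd_mult_powerD: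
  fixes p c x :: int
  assumes "prime p" "p dvd c * x^n"
  shows "p dvd c \<or> p dvd x"
  using assms by (auto simp: prime_dvd_mult_iff dest: prime_dvd_power)

lemma prime_dvd_4_iff:
  fixes p :: int
  assumes "prime p"
  shows "p dvd 4 \<longleftrightarrow> p = 2"
proof -
  have "p dvd 4 \<longleftrightarrow> p dvd 2^2" by simp
  also have "\<dots> \<longleftrightarrow> p dvd 2" using assms by (rule prime_dvd_power_iff) simp
  also have "\<dots> \<longleftrightarrow> p = 2" using assms primes_dvd_imp_eq[of p 2] by auto
  finally show ?thesis .
qed

lemma prime_dvd_diff_squares_iff:
  fixes p a b :: int
  assumes "prime p" "p dvd a^2 - b^2"
  shows "p dvd a \<longleftrightarrow> p dvd b"
proof -
  have "p dvd a^2 \<longleftrightarrow> p dvd b^2" using dvd_add_right_iff[OF assms(2), of "b^2"] by simp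
  then show ?thesis using assms(1) by (simp add: prime_dvd_power_iff)
qed

lemma coprimeI_dvd_three_squares:
  fixes f g M N :: int
  assumes "coprime M N" "\<not> 3 dvd f * g"
    and "\<And>p. p dvd f \<Longrightarrow> p dvd g \<Longrightarrow> p dvd 3*M^2 \<and> p dvd 3*N^2"
  shows "coprime f g"
proof (rule coprimeI_prime_dvd)
  fix p :: int assume p: "prime p" "p dvd f" "p dvd g"
  then have "p dvd 3*M^2" "p dvd 3*N^2" using assms(3) by blast+
  moreover have "\<not> p dvd 3"
  proof
    assume "p dvd 3"
    then have "p = 3" using p(1) by (simp add: primes_dvd_imp_eq)
    then show False using p(2) assms(2) by (simp add: dvd_mult2)
  qed
  ultimately have "p dvd M" "p dvd N" using prime_dvd_mult_powerD[OF p(1)] by blast+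
  then show False using p(1) assms(1) coprime_no_common_prime_divisor by blast
qed

lemma abs_less_square_iff: "\<bar>x\<bar> < \<bar>y\<bar> \<longleftrightarrow> x^2 < (y::'a::linordered_idom)^2"
  by (meson abs_le_square_iff not_le)

lemma square_of_rat_square:
  fixes n :: int and q :: rat
  assumes "of_int n = q^2"
  shows "\<exists>k. n = k^2"
proof -
  obtain a b where qb: "quotient_of q = (a, b)" by (cases "quotient_of q") auto
  have q: "q = of_int a / of_int b" and b0: "b > 0" and cp: "coprime a b"
    using quotient_of_div[OF qb] quotient_of_denom_pos[OF qb] quotient_of_coprime[OF qb] .
  have "of_int n * (of_int b)^2 = (of_int a :: rat)^2"
    using assms b0 unfolding q by (simp add: power_divide)
  then have e: "n * b^2 = a^2" by (metis of_int_eq_iff of_int_mult of_int_power)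
  then have "b^2 dvd a^2" by (metis dvd_triv_right)
  with cp have "is_unit (b^2)" by (metis coprime_absorb_left coprime_commute coprime_power_right_iff)
  then have "b^2 = 1" using b0 by simp
  then show ?thesis using e by auto
qed

lemma square_cancel_left:
  fixes c n k :: int
  assumes "c \<noteq> 0" "c^2 * n = k^2"
  shows "\<exists>j. n = j^2"
proof -
  have "c^2 dvd k^2" using assms(2) by (metis dvd_triv_left)
  then obtain j where "k = c * j" by auto
  then have "c^2 * n = c^2 * j^2" using assms(2) by (simp add: power_mult_distrib)
  then show ?thesis using assms(1) by auto
qed

lemma abs_mult_square_cancel:
  fixes c D k :: int
  assumes "c \<noteq> 0" "\<bar>c^2 * D\<bar> = k^2"
  shows "\<exists>j. \<bar>D\<bar> = j^2"
  using square_cancel_left[of c "\<bar>D\<bar>" k] assms by (simp add: abs_mult)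

lemma coprime_mult_eq_square:
  fixes u v w :: int
  assumes "coprime u v" "u \<ge> 0" "v \<ge> 0" "u * v = w^2"
  shows "\<exists>a b. u = a^2 \<and> v = b^2"
proof (cases "u = 0 \<or> v = 0")
  case True
  then have "u = 0 \<and> v = 1 \<or> u = 1 \<and> v = 0" using assms(1-3) by auto
  then show ?thesis by (metis power_one zero_power2)
next
  case False
  have "coprime (nat u) (nat v)" using assms(1-3) by (simp add: coprime_int_iff[symmetric])
  moreover have "int (nat u * nat v) = int ((nat \<bar>w\<bar>)^2)" using assms(2-4) by simp
  then have "nat u * nat v = (nat \<bar>w\<bar>)^2" by (simp only: of_nat_eq_iff)
  ultimately have "is_nth_power 2 (nat u)" "is_nth_power 2 (nat v)"
    using is_nth_power_mult_coprime_natD[of "nat u" "nat v" 2] False assms(2,3) by auto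
  then obtain c d where "nat u = c^2" "nat v = d^2" unfolding is_nth_power_def by blast
  then have "u = (int c)^2" "v = (int d)^2" using assms(2,3) by (metis int_nat_eq of_nat_power)+
  then show ?thesis by blast
qed

lemma coprime_mult_eq_square_pos:
  fixes u v w :: int
  assumes "coprime u v" "v > 0" "u * v = w^2"
  shows "\<exists>a b. u = a^2 \<and> v = b^2"
proof -
  have "u \<ge> 0" using assms(2,3) by (metis linorder_not_le mult_neg_pos zero_le_power2)
  then show ?thesis using coprime_mult_eq_square assms by auto
qed

lemma coprime_abs_mult_eq_square:
  fixes a b j :: int
  assumes "coprime a b" "\<bar>a * b\<bar> = j^2"
  shows "\<exists>A B. \<bar>a\<bar> = A^2 \<and> \<bar>b\<bar> = B^2"
  using coprime_mult_eq_square[of "\<bar>a\<bar>" "\<bar>b\<bar>" j] assms by (simp add: abs_mult)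

lemma coprime_mult_eq_fourth_power:
  fixes u v t :: int
  assumes "coprime u v" "u \<ge> 0" "v \<ge> 0" "u * v = t^4"
  shows "\<exists>m n. u = m^4 \<and> v = n^4 \<and> t^2 = m^2 * n^2 \<and> coprime m n"
proof -
  have "u * v = (t^2)^2" using assms(4) by (simp add: power_mult[symmetric])
  then obtain a b where a: "u = a^2" and b: "v = b^2" using coprime_mult_eq_square assms(1-3) by blast
  have cab: "coprime \<bar>a\<bar> \<bar>b\<bar>" using assms(1) unfolding a b by simp
  have "(\<bar>a\<bar> * \<bar>b\<bar>)^2 = (t^2)^2" using \<open>u * v = (t^2)^2\<close> unfolding a b
    by (simp add: power_mult_distrib)
  then have ab: "\<bar>a\<bar> * \<bar>b\<bar> = t^2"
    by (metis power2_eq_iff_nonneg abs_ge_zero mult_nonneg_nonneg zero_le_power2)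
  obtain m n where m: "\<bar>a\<bar> = m^2" and n: "\<bar>b\<bar> = n^2"
    using coprime_mult_eq_square[OF cab _ _ ab] by auto
  have "u = m^4" "v = n^4" unfolding a b using m n
    by (metis power2_abs power_mult numeral_Bit0 mult_2 numeral_One semiring_norm(2) one_add_one)+
  moreover have "t^2 = m^2 * n^2" "coprime m n" using ab m n cab by auto
  ultimately show ?thesis by blast
qed

lemma coprime_mult_eq_three_times_square:
  fixes A B k :: int
  assumes "coprime A B" "A > 0" "B > 0" "A * B = 3*k^2"
  shows "\<exists>m n. coprime m n \<and> \<not> 3 dvd n \<and> A + B = 3*m^2 + n^2 \<and> k^2 = m^2*n^2"
proof -
  have *: "\<exists>m n. coprime m n \<and> \<not> 3 dvd n \<and> A + B = 3*m^2 + n^2 \<and> k^2 = m^2*n^2"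
    if cp: "coprime A B" and B0: "B > 0" and AB: "A * B = 3*k^2" and h3: "3 dvd A" for A B
  proof -
    from h3 obtain G where G: "A = 3*G" by blast
    have "coprime G B" "G * B = k^2" using cp AB unfolding G by simp_all
    then obtain m n where m: "G = m^2" and n: "B = n^2"
      using coprime_mult_eq_square_pos B0 by blast
    have "coprime m n" using \<open>coprime G B\<close> unfolding m n by simp
    moreover have "\<not> 3 dvd n"
    proof
      assume "3 dvd n"
      then have "3 dvd B" unfolding n by (simp add: power2_eq_square)
      then show False using h3 cp coprime_no_common_prime_divisor[of A B 3] by simp
    qed
    moreover have "A + B = 3*m^2 + n^2" "k^2 = m^2*n^2" using G m n \<open>G * B = k^2\<close> by simp_all
    ultimately show ?thesis by blast
  qed
  have "3 dvd A * B" using assms(4) by simp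
  then have "3 dvd A \<or> 3 dvd B" by (simp add: prime_dvd_mult_iff)
  then show ?thesis
  proof
    assume "3 dvd B"
    moreover have "coprime B A" "B * A = 3*k^2" using assms by (simp_all add: coprime_commute mult.commute)
    ultimately show ?thesis using *[of B A] assms(2) by (simp add: add.commute)
  qed (use * assms in blast)
qed

lemma four_number_lemma:
  fixes A B C D :: int
  assumes "A * B = C * D"
  shows "\<exists>x y z w. A = x*y \<and> B = z*w \<and> C = x*z \<and> D = y*w"
proof (cases "A = 0 \<and> C = 0")
  case True
  then show ?thesis by (intro exI[of _ 0] exI[of _ D] exI[of _ B] exI[of _ 1]) auto
next
  case False
  define x where "x = gcd A C"
  have x0: "x \<noteq> 0" using False unfolding x_def by auto
  obtain y z where y: "A = x * y" and z: "C = x * z" and cyz: "coprime y z"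
    using gcd_coprime_exists[of A C] x0 unfolding x_def by (auto simp: mult.commute)
  have yz: "y * B = z * D" using assms y z x0 by (simp add: mult.assoc)
  then have "z dvd B" using cyz by (metis coprime_commute coprime_dvd_mult_right_iff dvd_triv_left)
  then obtain w where w: "B = z * w" by blast
  show ?thesis
  proof (cases "z = 0")
    case False
    then have "D = y * w" using yz w by (simp add: mult.left_commute)
    then show ?thesis using y z w by blast
  next
    case True
    then have "\<bar>y\<bar> = 1" using cyz by simp
    then have "y * y = 1" by (metis abs_mult_self_eq mult_1)
    then have "D = y * (y * D)" by (metis mult.assoc mult_1)
    then show ?thesis using y z w True by (intro exI[of _ x] exI[of _ y] exI[of _ z] exI[of _ "y*D"]) auto
  qed
qed

lemma three_dvd_sum_squares:
  fixes a b :: int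
  assumes "3 dvd a^2 + b^2"
  shows "3 dvd a" "3 dvd b"
proof -
  have sq3: "x^2 mod 3 = (if 3 dvd x then 0 else 1)" for x :: int
  proof -
    have "x mod 3 \<in> {0,1,2}" by auto
    then show ?thesis by (auto simp: power_mod[of x 3 2, symmetric])
  qed
  have "(a^2 mod 3 + b^2 mod 3) mod 3 = 0" using assms by (simp add: mod_add_eq)
  then show "3 dvd a" "3 dvd b" unfolding sq3 by (auto split: if_splits)
qed

lemma abs_three_mult_neq_square:
  fixes c j :: int
  assumes "\<not> 3 dvd c"
  shows "\<bar>3*c\<bar> \<noteq> j^2"
proof
  assume h: "\<bar>3*c\<bar> = j^2"
  then have "3 dvd j^2" by (metis abs_mult dvd_triv_left abs_numeral)
  then have "3 dvd j" by (simp add: prime_dvd_power_iff)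
  then obtain i where "j = 3*i" by blast
  then have "\<bar>c\<bar> = 3*i^2" using h by (simp add: abs_mult power_mult_distrib)
  then show False using assms by (metis dvd_abs_iff dvd_triv_left)
qed

lemma primitive_pythagorean_triple:
  fixes a b c :: int
  assumes cab: "coprime a b" and eb: "even b" and eq: "a^2 + b^2 = c^2"
  shows "\<exists>p q. coprime p q \<and> b^2 = 4*p^2*q^2 \<and> a^2 = (p^2 - q^2)^2 \<and> c^2 = (p^2 + q^2)^2"
proof -
  define a' c' where "a' = \<bar>a\<bar>" and "c' = \<bar>c\<bar>"
  have oa: "odd a'" using cab eb coprime_common_divisor_int[of a b 2] unfolding a'_def by auto
  then have "odd (c^2)" using eb eq[symmetric] unfolding a'_def by simp
  then have oc: "odd c'" unfolding c'_def by simp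
  have eq': "a'^2 + b^2 = c'^2" unfolding a'_def c'_def using eq by simp
  then have "a'^2 \<le> c'^2" by (smt (verit) zero_le_power2)
  then have ac: "a' \<le> c'" unfolding a'_def c'_def by (simp add: abs_le_square_iff)
  obtain k l where k: "c' - a' = 2*k" and l: "c' + a' = 2*l" using oa oc by (meson evenE odd_add even_diff)
  obtain h where h: "b = 2*h" using eb by (meson evenE)
  have "(2*k)*(2*l) = (2*h)^2" unfolding k[symmetric] l[symmetric] h[symmetric] using eq'
    by (simp add: algebra_simps power2_eq_square)
  then have kl: "k*l = h^2" by (simp add: power2_eq_square)
  have cac: "coprime a c"
  proof (rule coprimeI_prime_dvd)
    fix p :: int assume p: "prime p" "p dvd a" "p dvd c"
    then have "p dvd c^2 - a^2" by (simp add: power2_eq_square)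
    then have "p dvd b" using p(1) eq prime_dvd_power by (metis add_diff_cancel_left')
    then show False using p cab coprime_no_common_prime_divisor by blast
  qed
  have ckl: "coprime k l"
  proof (rule coprimeI_prime_dvd)
    fix p :: int assume p: "prime p" "p dvd k" "p dvd l"
    have "a' = l - k" "c' = k + l" using k l by linarith+
    then have "p dvd a'" "p dvd c'" using p by (simp_all add: dvd_diff)
    then have "p dvd a" "p dvd c" unfolding a'_def c'_def by simp_all
    then show False using p(1) cac coprime_no_common_prime_divisor by blast
  qed
  have "k \<ge> 0" "l \<ge> 0" using k l ac unfolding a'_def by auto
  then obtain q p where q: "k = q^2" and p: "l = p^2" using coprime_mult_eq_square[OF ckl _ _ kl] by blast
  have "coprime p q" using ckl unfolding p q by (simp add: coprime_commute)
  moreover have "a' = p^2 - q^2" "c' = p^2 + q^2" using k l p q by auto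
  moreover have "b^2 = 4*p^2*q^2" using kl h p q by (simp add: power_mult_distrib mult.commute)
  ultimately show ?thesis unfolding a'_def c'_def by (metis power2_abs)
qed

section \<open>Squares modulo 8\<close>

lemma square_mod_8: "(x::int)^2 mod 8 \<in> {0, 1, 4}"
proof -
  have "x mod 8 \<in> {0,1,2,3,4,5,6,7}" by auto
  then show ?thesis by (auto simp: power_mod[of x 8 2, symmetric])
qed

lemma odd_iff_square_mod_8: "odd (x::int) \<longleftrightarrow> x^2 mod 8 = 1"
proof -
  have "x mod 8 \<in> {0,1,2,3,4,5,6,7}" by auto
  moreover have "odd x \<longleftrightarrow> odd (x mod 8)" by (simp add: odd_iff_mod_2_eq_one mod_mod_cancel)
  ultimately show ?thesis by (auto simp: power_mod[of x 8 2, symmetric])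
qed

lemma binary_form_square_mod_8:
  fixes x y :: int
  assumes "a*x^2 + b*y^2 = z^2"
  shows "(a*(x^2 mod 8) + b*(y^2 mod 8)) mod 8 \<in> {0,1,4}"
proof -
  have "[a*(x^2 mod 8) + b*(y^2 mod 8) = z^2] (mod 8)"
    unfolding assms[symmetric] by (intro cong_add cong_mult cong_refl cong_mod_leftI)
  then show ?thesis using square_mod_8[of z] by (simp add: cong_def)
qed

lemma binary_forms_squares_mod_8:
  fixes x y :: int
  assumes "a*x^2 + b*y^2 = z^2" "c*x^2 + d*y^2 = t^2"
    and "\<forall>X\<in>{0,1,4}. \<forall>Y\<in>{0,1,4}. (a*X + b*Y) mod 8 \<in> {0,1,4} \<longrightarrow> (c*X + d*Y) mod 8 \<in> {0,1,4} \<longrightarrow> P X Y"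
  shows "P (x^2 mod 8) (y^2 mod 8)"
  using assms(3) square_mod_8[of x] square_mod_8[of y]
    binary_form_square_mod_8[OF assms(1)] binary_form_square_mod_8[OF assms(2)]
  by (meson bspec)

lemma twice_sum_and_diff_squares_even:
  fixes m n c d :: int
  assumes "2*m^2 + n^2 = c^2" "m^2 - n^2 = d^2"
  shows "even m \<and> even n"
proof -
  have "m^2 mod 8 \<noteq> 1 \<and> n^2 mod 8 \<noteq> 1"
    by (rule binary_forms_squares_mod_8[where a=2 and b=1 and c=1 and d="-1" and x=m and y=n
          and z=c and t=d and P="\<lambda>X Y. X \<noteq> 1 \<and> Y \<noteq> 1"]) (use assms in simp_all)
  then show ?thesis using odd_iff_square_mod_8 by blast
qed

lemma sum_and_twice_diff_squares_even:
  fixes r s a b :: int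
  assumes "r^2 + s^2 = a^2" "2*s^2 - r^2 = b^2"
  shows "even r \<and> even s"
proof -
  have "r^2 mod 8 \<noteq> 1 \<and> s^2 mod 8 \<noteq> 1"
    by (rule binary_forms_squares_mod_8[where a=1 and b=1 and c="-1" and d=2 and x=r and y=s
          and z=a and t=b and P="\<lambda>X Y. X \<noteq> 1 \<and> Y \<noteq> 1"]) (use assms in simp_all)
  then show ?thesis using odd_iff_square_mod_8 by blast
qed

lemma twice_diff_and_diff_twice_squares_even:
  fixes r s a b :: int
  assumes "2*r^2 - s^2 = a^2" "r^2 - 2*s^2 = b^2"
  shows "even r \<and> even s"
proof -
  have "r^2 mod 8 \<noteq> 1 \<and> s^2 mod 8 \<noteq> 1"
    by (rule binary_forms_squares_mod_8[where a=2 and b="-1" and c=1 and d="-2" and x=r and y=s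
          and z=a and t=b and P="\<lambda>X Y. X \<noteq> 1 \<and> Y \<noteq> 1"]) (use assms in simp_all)
  then show ?thesis using odd_iff_square_mod_8 by blast
qed

section \<open>Euler's quartic \<open>x\<^sup>4 - x\<^sup>2y\<^sup>2 + y\<^sup>4 = z\<^sup>2\<close>\<close>

definition euler_quartic :: "int \<Rightarrow> int \<Rightarrow> int" where
  "euler_quartic x y = x^4 - x^2*y^2 + y^4"

definition nontrivial_pair :: "int \<Rightarrow> int \<Rightarrow> bool" where
  "nontrivial_pair x y \<longleftrightarrow> x*y \<noteq> 0 \<and> x^2 \<noteq> y^2"

lemma odd_square_ne_quartic_form:
  fixes y m n :: int
  assumes "odd y"
  shows "y^2 \<noteq> 3*m^4 - n^4 + 2*m^2*n^2"
proof
  assume "y^2 = 3*m^4 - n^4 + 2*m^2*n^2"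
  then have eq: "y^2 + (m^2 - n^2)^2 = 4*(m^2)^2" by algebra
  have "even (y^2 + (m^2 - n^2)^2)" unfolding eq by simp
  then have "odd (m^2 - n^2)" using assms by simp
  then have "(y^2 mod 8 + (m^2 - n^2)^2 mod 8) mod 8 = 2"
    using assms by (simp add: odd_iff_square_mod_8[THEN iffD1])
  then have "(4*(m^2)^2) mod 8 = 2" unfolding mod_add_eq eq .
  moreover have "(4*k) mod 8 \<noteq> 2" for k :: int by presburger
  ultimately show False by blast
qed

lemma quartic_form_square_parity:
  fixes y m n :: int
  assumes "odd y" "y^2 = n^4 + 2*m^2*n^2 - 3*m^4"
  shows "even m" "odd n"
proof -
  have eq: "y^2 + 4*(m^2)^2 = (m^2 + n^2)^2" using assms(2) by algebra
  have "odd (y^2 + 4*(m^2)^2)" using assms(1) by simp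
  then have "odd (m^2 + n^2)" unfolding eq by simp
  then have "(m^2 + n^2)^2 mod 8 = y^2 mod 8" using assms(1) by (simp add: odd_iff_square_mod_8[THEN iffD1])
  then have "8 dvd 4*(m^2)^2" unfolding eq[symmetric] by (simp add: mod_eq_dvd_iff)
  moreover have "8 dvd 4*k \<Longrightarrow> even k" for k :: int by presburger
  ultimately have "even ((m^2)^2)" by blast
  then show "even m" by simp
  then show "odd n" using \<open>odd (m^2 + n^2)\<close> by simp
qed

lemma euler_quartic_descent_gcd:
  assumes eq: "euler_quartic x y = z^2" and nt: "nontrivial_pair x y" and nc: "\<not> coprime x y"
  shows "\<exists>x' y' z'. euler_quartic x' y' = z'^2 \<and> nontrivial_pair x' y' \<and> \<bar>z'\<bar> < \<bar>z\<bar>"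
proof -
  define g where "g = gcd x y"
  have g0: "g \<noteq> 0" using nt unfolding g_def nontrivial_pair_def by auto
  obtain x' y' where xg: "x = x' * g" and yg: "y = y' * g"
    using gcd_coprime_exists[of x y] g0 unfolding g_def by auto
  have "\<bar>g\<bar> \<noteq> 1" "g \<ge> 0" using nc unfolding g_def by (simp_all add: coprime_iff_gcd_eq_1)
  then have "g \<ge> 2" using g0 by auto
  then have g2: "g^2 \<ge> 4" using power_mono[of 2 g 2] by simp
  have eq': "(g^2)^2 * euler_quartic x' y' = z^2" using eq unfolding xg yg euler_quartic_def by algebra
  then have "(g^2)^2 dvd z^2" by (metis dvd_triv_left)
  then have "g^2 dvd z" using pow_divides_pow_iff[of 2 "g^2" z] by simp
  then obtain z' where zz: "z = g^2 * z'" by blast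
  have E: "euler_quartic x' y' = z'^2" using eq' g0 unfolding zz by (simp add: power_mult_distrib)
  have "nontrivial_pair x' y'" using nt xg yg unfolding nontrivial_pair_def by (auto simp: power_mult_distrib)
  moreover have "z' \<noteq> 0"
  proof
    assume "z' = 0"
    then have "(x'^2 - y'^2)^2 + (x'*y')^2 = 0" using E unfolding euler_quartic_def by algebra
    moreover have "(x'*y')^2 > 0" using \<open>nontrivial_pair x' y'\<close> unfolding nontrivial_pair_def by simp
    ultimately show False by (smt (verit) zero_le_power2)
  qed
  then have "\<bar>z'\<bar> < \<bar>z\<bar>" using g2 unfolding zz by (simp add: abs_mult)
  ultimately show ?thesis using E by blast
qed

lemma euler_quartic_descent_odd:
  assumes eq: "euler_quartic x y = z^2" and nt: "nontrivial_pair x y"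
    and cp: "coprime x y" and odd: "odd x" "odd y"
  shows "\<exists>x' y' z'. euler_quartic x' y' = z'^2 \<and> nontrivial_pair x' y' \<and> \<bar>z'\<bar> < \<bar>z\<bar>"
proof -
  have cxy: "coprime (x*y) (x^2 - y^2)"
  proof (rule coprimeI_prime_dvd)
    fix p :: int assume p: "prime p" "p dvd x*y" "p dvd x^2 - y^2"
    have "p dvd x \<or> p dvd y" using p by (simp add: prime_dvd_mult_iff)
    then have "p dvd x \<and> p dvd y" using prime_dvd_diff_squares_iff[OF p(1,3)] by blast
    then show False using p(1) cp coprime_no_common_prime_divisor by blast
  qed
  have "(x*y)^2 + (x^2 - y^2)^2 = euler_quartic x y" unfolding euler_quartic_def by algebra
  then have "(x*y)^2 + (x^2 - y^2)^2 = z^2" using eq by simp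
  from primitive_pythagorean_triple[OF cxy _ this] odd obtain p q where
    pq: "(x^2 - y^2)^2 = 4*p^2*q^2" "(x*y)^2 = (p^2 - q^2)^2" by auto
  have "even (x^2 + y^2)" using odd by simp
  then obtain z' where z': "x^2 + y^2 = 2*z'" by blast
  have "4 * euler_quartic p q = 4 * (p^2 - q^2)^2 + 4*p^2*q^2" unfolding euler_quartic_def by algebra
  also have "\<dots> = 4*(x*y)^2 + (x^2 - y^2)^2" by (simp only: pq)
  also have "\<dots> = (x^2 + y^2)^2" by algebra
  finally have E: "euler_quartic p q = z'^2" unfolding z' by algebra
  have "nontrivial_pair p q" using pq nt unfolding nontrivial_pair_def by auto
  moreover have "\<bar>z'\<bar> < \<bar>z\<bar>"
  proof -
    have "4*euler_quartic x y = (x^2 + y^2)^2 + 3*(x^2 - y^2)^2" unfolding euler_quartic_def by algebra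
    then have "4*z^2 = 4*z'^2 + 3*(x^2 - y^2)^2" using eq unfolding z' by algebra
    moreover have "(x^2 - y^2)^2 > 0" using nt unfolding nontrivial_pair_def by simp
    ultimately have "z'^2 < z^2" by linarith
    then show ?thesis by (simp add: abs_less_square_iff)
  qed
  ultimately show ?thesis using E by blast
qed

lemma euler_quartic_from_pythagorean_pair:
  fixes c m n d :: int
  assumes cp: "coprime c m" and em: "even m" and m0: "m \<noteq> 0"
    and pyth1: "c^2 + m^2 = n^2" and pyth2: "c^2 + 4*m^2 = d^2"
  shows "\<exists>x y. euler_quartic x y = n^2 \<and> nontrivial_pair x y"
proof -
  obtain e f where cef: "coprime e f" and mef: "m^2 = 4*e^2*f^2"
    and cef2: "c^2 = (e^2 - f^2)^2" and nef: "n^2 = (e^2 + f^2)^2"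
    using primitive_pythagorean_triple[OF cp em pyth1] by blast
  have "odd c" using cp em coprime_common_divisor_int[of c m 2] by auto
  then have oef: "odd (e^2 - f^2)" using cef2 by (metis even_power pos2)
  have cef4: "coprime (e^2 - f^2) (4*e*f)"
  proof (rule coprimeI_prime_dvd)
    fix p :: int assume p: "prime p" "p dvd e^2 - f^2" "p dvd 4*e*f"
    have "p = 2 \<or> p dvd e \<or> p dvd f" using p(1,3) by (simp add: prime_dvd_mult_iff prime_dvd_4_iff)
    moreover have "p \<noteq> 2" using p(2) oef by auto
    ultimately have "p dvd e \<and> p dvd f" using prime_dvd_diff_squares_iff[OF p(1,2)] by blast
    then show False using p(1) cef coprime_no_common_prime_divisor by blast
  qed
  have "(e^2 - f^2)^2 + (4*e*f)^2 = d^2"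
    using pyth2 cef2 mef by (simp add: power_mult_distrib)
  from primitive_pythagorean_triple[OF cef4 _ this] obtain x y where
    cxy: "coprime x y" and xy1: "(4*e*f)^2 = 4*x^2*y^2" and xy2: "(e^2 - f^2)^2 = (x^2 - y^2)^2"
    by auto
  have xy: "x^2*y^2 = 4*e^2*f^2" using xy1 by (simp add: power_mult_distrib)
  have "euler_quartic x y = (x^2 - y^2)^2 + x^2*y^2" unfolding euler_quartic_def by algebra
  also have "\<dots> = (e^2 + f^2)^2" unfolding xy xy2[symmetric] by algebra
  finally have E: "euler_quartic x y = n^2" using nef by simp
  have "x*y \<noteq> 0" using xy mef m0 by auto
  moreover have "x^2 \<noteq> y^2"
  proof
    assume "x^2 = y^2"
    then have "x = y \<or> x = - y" by (simp add: power2_eq_iff)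
    then have "\<bar>x\<bar> = 1" using cxy by auto
    then have "x^2 = 1" by (metis power2_abs power_one)
    then have "(1::int) = 2 * (2*e^2*f^2)" using xy \<open>x^2 = y^2\<close> by simp
    then show False by presburger
  qed
  ultimately show ?thesis using E unfolding nontrivial_pair_def by blast
qed

lemma coprime_factors_three_fourth_power:
  fixes g h t y :: int
  assumes cty: "coprime t y" and prod: "g * h = 3*t^4" and dif: "h - g = y^2 - 2*t^2"
  shows "coprime g h"
proof (rule coprimeI_prime_dvd)
  fix p :: int assume p: "prime p" "p dvd g" "p dvd h"
  have pd: "p dvd y^2 - 2*t^2" using p dif by (metis dvd_diff)
  have "p dvd 3 * t^4" using p prod by (metis dvd_mult2)
  then have "p dvd 3 \<or> p dvd t" using prime_dvd_mult_powerD[OF p(1)] by blast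
  then show False
  proof
    assume "p dvd t"
    then have "p dvd 2*t^2" by (simp add: power2_eq_square)
    then have "p dvd (y^2 - 2*t^2) + 2*t^2" using pd by (rule dvd_add[rotated])
    then have "p dvd y^2" by simp
    then show False using \<open>p dvd t\<close> p(1) cty coprime_no_common_prime_divisor prime_dvd_power by blast
  next
    assume "p dvd 3"
    then have "p = 3" using p(1) by (simp add: primes_dvd_imp_eq)
    then have "3 dvd (y^2 - 2*t^2) + 3*t^2" using pd by (intro dvd_add) simp_all
    then have "3 dvd y \<and> 3 dvd t" using three_dvd_sum_squares[of y t] by (simp add: add.commute)
    then show False using cty coprime_no_common_prime_divisor[of t y 3] by auto
  qed
qed

lemma euler_quartic_even_factorization:
  fixes x y z :: int
  assumes cp: "coprime x y" and ex: "even x" and x0: "x \<noteq> 0" and eq: "euler_quartic x y = z^2"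
  shows "\<exists>m n. coprime m n \<and> m \<noteq> 0 \<and> y^2 = n^4 + 2*m^2*n^2 - 3*m^4 \<and> \<bar>z\<bar> = 3*m^4 + n^4"
proof -
  have oy: "odd y" using cp ex coprime_common_divisor_int[of x y 2] by auto
  obtain t where xt: "x = 2*t" using ex by blast
  have t0: "t \<noteq> 0" using x0 xt by simp
  have cty: "coprime t y" using cp unfolding xt by simp
  have eqz: "16*t^4 - 4*t^2*y^2 + y^4 = \<bar>z\<bar>^2"
    using eq unfolding xt euler_quartic_def by (simp add: power_mult_distrib)
  then have "odd (\<bar>z\<bar>^2)" using oy by (metis even_add even_diff even_mult_iff even_numeral even_power zero_less_numeral)
  then have oz: "odd \<bar>z\<bar>" by simp
  then have "even (\<bar>z\<bar> - y^2 + 2*t^2)" "even (\<bar>z\<bar> + y^2 - 2*t^2)" using oy by simp_all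
  then obtain g h where g: "\<bar>z\<bar> - y^2 + 2*t^2 = 2*g" and h: "\<bar>z\<bar> + y^2 - 2*t^2 = 2*h"
    by (meson evenE)
  have sum: "g + h = \<bar>z\<bar>" and dif: "h - g = y^2 - 2*t^2" using g h by linarith+
  have "(2*g)*(2*h) = 12*t^4" unfolding g[symmetric] h[symmetric] using eqz by algebra
  then have prod: "g * h = 3*t^4" by simp
  have "0 < g * h" using prod t0 by simp
  moreover have "\<bar>z\<bar> > 0" using oz by (metis abs_ge_zero even_zero le_less)
  ultimately have gp: "g > 0" and hp: "h > 0" using sum by (auto simp: zero_less_mult_iff)
  have cgh: "coprime g h" using coprime_factors_three_fourth_power[OF cty prod dif] .
  have "3 dvd g * h" using prod by simp
  then have "3 dvd g \<or> 3 dvd h" by (simp add: prime_dvd_mult_iff)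
  then show ?thesis
  proof
    assume "3 dvd h"
    then obtain k where k: "h = 3*k" by blast
    obtain n m where "g = n^4" "k = m^4" "t^2 = n^2*m^2"
      using coprime_mult_eq_fourth_power[of g k t] cgh prod gp hp k by auto
    then have "y^2 = 3*m^4 - n^4 + 2*m^2*n^2" using dif k by (simp add: algebra_simps)
    then show ?thesis using odd_square_ne_quartic_form[OF oy] by blast
  next
    assume "3 dvd g"
    then obtain k where k: "g = 3*k" by blast
    obtain m n where mn: "k = m^4" "h = n^4" "t^2 = m^2*n^2" and cmn: "coprime m n"
      using coprime_mult_eq_fourth_power[of k h t] cgh prod gp hp k by auto
    have "y^2 = n^4 + 2*m^2*n^2 - 3*m^4" using dif k mn by (simp add: algebra_simps)
    moreover have "m \<noteq> 0" using mn t0 by auto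
    moreover have "\<bar>z\<bar> = 3*m^4 + n^4" using sum k mn by simp
    ultimately show ?thesis using cmn by blast
  qed
qed

lemma euler_quartic_descent_even:
  assumes eq: "euler_quartic x y = z^2" and nt: "nontrivial_pair x y"
    and cp: "coprime x y" and ex: "even x"
  shows "\<exists>x' y' z'. euler_quartic x' y' = z'^2 \<and> nontrivial_pair x' y' \<and> \<bar>z'\<bar> < \<bar>z\<bar>"
proof -
  have "x \<noteq> 0" using nt unfolding nontrivial_pair_def by auto
  then obtain m n where cmn: "coprime m n" and m0: "m \<noteq> 0"
    and yeq: "y^2 = n^4 + 2*m^2*n^2 - 3*m^4" and zeq: "\<bar>z\<bar> = 3*m^4 + n^4"
    using euler_quartic_even_factorization[OF cp ex _ eq] by blast
  have oy: "odd y" using cp ex coprime_common_divisor_int[of x y 2] by auto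
  have em: "even m" and on: "odd n" using quartic_form_square_parity[OF oy yeq] by auto
  define f g where "f = n^2 - m^2" and "g = n^2 + 3*m^2"
  have fg: "f * g = y^2" unfolding f_def g_def yeq by algebra
  have cfm: "coprime f m"
  proof (rule coprimeI_prime_dvd)
    fix p :: int assume p: "prime p" "p dvd f" "p dvd m"
    then have "p dvd n" using prime_dvd_diff_squares_iff[of p n m] unfolding f_def by blast
    then show False using p cmn coprime_no_common_prime_divisor by blast
  qed
  have cfg: "coprime f g"
  proof (rule coprimeI_prime_dvd)
    fix p :: int assume p: "prime p" "p dvd f" "p dvd g"
    then have "p dvd g - f" by (simp add: dvd_diff)
    then have "p dvd 2^2 * m^2" unfolding f_def g_def by (simp add: algebra_simps)
    then have "p = 2 \<or> p dvd m" using p(1) by (auto simp: prime_dvd_mult_iff prime_dvd_4_iff dest: prime_dvd_power)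
    moreover have "odd f" unfolding f_def using em on by simp
    ultimately show False using p cfm coprime_no_common_prime_divisor by blast
  qed
  have "n \<noteq> 0" using on by auto
  then have "g > 0" unfolding g_def by (simp add: add_pos_nonneg)
  then obtain c d where c: "f = c^2" and d: "g = d^2" using coprime_mult_eq_square_pos[OF cfg _ fg] by blast
  have "coprime c m" using cfm unfolding c by simp
  moreover have "c^2 + m^2 = n^2" "c^2 + 4*m^2 = d^2" using c d unfolding f_def g_def by simp_all
  ultimately obtain x' y' where "euler_quartic x' y' = n^2" "nontrivial_pair x' y'"
    using euler_quartic_from_pythagorean_pair[OF _ em m0] by blast
  moreover have "\<bar>n\<bar> < \<bar>z\<bar>"
  proof -
    have "\<bar>n\<bar>^1 \<le> \<bar>n\<bar>^4" using \<open>n \<noteq> 0\<close> by (intro power_increasing) auto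
    then have "\<bar>n\<bar> \<le> n^4" by (simp add: power_abs)
    moreover have "m^4 > 0" using m0 by simp
    ultimately show ?thesis unfolding zeq by linarith
  qed
  ultimately show ?thesis by blast
qed

theorem euler_quartic_eq_square_imp_trivial:
  assumes "euler_quartic x y = z^2"
  shows "\<not> nontrivial_pair x y"
  using assms
proof (induction "nat \<bar>z\<bar>" arbitrary: x y z rule: less_induct)
  case less
  show ?case
  proof
    assume nt: "nontrivial_pair x y"
    have "\<exists>x' y' z'. euler_quartic x' y' = z'^2 \<and> nontrivial_pair x' y' \<and> \<bar>z'\<bar> < \<bar>z\<bar>"
    proof (cases "coprime x y")
      case False
      then show ?thesis using euler_quartic_descent_gcd[OF less.prems nt] by blast
    next
      case True
      consider "odd x" "odd y" | "even x" | "even y" by blast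
      then show ?thesis
      proof cases
        case 1
        then show ?thesis using euler_quartic_descent_odd[OF less.prems nt True] by blast
      next
        case 2
        then show ?thesis using euler_quartic_descent_even[OF less.prems nt True] by blast
      next
        case 3
        have "euler_quartic y x = z^2" "nontrivial_pair y x" "coprime y x"
          using less.prems nt True unfolding euler_quartic_def nontrivial_pair_def
          by (simp_all add: algebra_simps coprime_commute)
        then show ?thesis using euler_quartic_descent_even 3 by blast
      qed
    qed
    then show False using less.hyps by (metis nat_less_eq_zless abs_ge_zero)
  qed
qed

lemma euler_quartic_curve_trivial:
  fixes X Y Z W :: int
  assumes rel: "2*X*W*(Y^2 - Z^2) + Y*Z*(X^2 - W^2) = 0" and X0: "X \<noteq> 0"
  shows "Y*Z = 0 \<or> (Y^2 = Z^2 \<and> X^2 = W^2)"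
proof -
  have "X^2 * euler_quartic Y Z = (Y*Z*W - (Y^2 - Z^2)*X)^2"
    using rel unfolding euler_quartic_def by algebra
  then obtain k where "euler_quartic Y Z = k^2" using square_cancel_left[OF X0] by blast
  then have "Y*Z = 0 \<or> Y^2 = Z^2"
    using euler_quartic_eq_square_imp_trivial unfolding nontrivial_pair_def by blast
  then show ?thesis using rel by auto
qed

text \<open>With \<open>U = a + b\<close>, \<open>V = a - b\<close>, \<open>p = r + s\<close>, \<open>q = r - s\<close> the hypotheses say
  \<open>U V = 3 p q\<close> and \<open>U\<^sup>2 + V\<^sup>2 = p\<^sup>2 + q\<^sup>2\<close>. Parametrising the second relation by the four
  number lemma turns the first one into a point on Euler's quartic.\<close>

lemma twice_diff_squares_pair_imp_eq:
  fixes r s a b :: int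
  assumes ha: "2*r^2 - s^2 = a^2" and hb: "2*s^2 - r^2 = b^2"
  shows "r^2 = s^2"
proof -
  define U V p q where "U = a + b" and "V = a - b" and "p = r + s" and "q = r - s"
  have h1: "U*V = 3*p*q" unfolding U_def V_def p_def q_def using ha hb by algebra
  have pq: "p*q = r^2 - s^2" unfolding p_def q_def by algebra
  have "(U - p)*(U + p) = (q - V)*(q + V)" unfolding U_def V_def p_def q_def using ha hb by algebra
  then obtain X Y Z W where e1: "U - p = X*Y" and e2: "U + p = Z*W" and e3: "q - V = X*Z"
    and e4: "q + V = Y*W" using four_number_lemma by blast
  have "2*(2*X*W*(Y^2 - Z^2) + Y*Z*(X^2 - W^2)) = 4*(U*V - 3*p*q)"
    using e1 e2 e3 e4 by algebra
  then have "2*X*W*(Y^2 - Z^2) + Y*Z*(X^2 - W^2) = 0" using h1 by simp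
  then have "X = 0 \<or> Y*Z = 0 \<or> (Y^2 = Z^2 \<and> X^2 = W^2)"
    using euler_quartic_curve_trivial by (cases "X = 0") blast+
  then consider "X = 0" | "Y = 0" | "Z = 0" | "(Z*W)^2 = (X*Y)^2"
    by (auto simp: power_mult_distrib)
  then have "p*q = 0 \<or> U = 0"
  proof cases
    case 1
    then have "U = p" "V = q" using e1 e3 by auto
    then show ?thesis using h1 by auto
  next
    case 2
    then have "U = p" "V = -q" using e1 e4 by auto
    then show ?thesis using h1 by auto
  next
    case 3
    then have "U = -p" "V = q" using e2 e3 by auto
    then show ?thesis using h1 by auto
  next
    case 4
    then have "Z*W = X*Y \<or> Z*W = -(X*Y)" by (simp add: power2_eq_iff)
    then show ?thesis using e1 e2 by auto
  qed
  then show ?thesis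
  proof
    assume "U = 0"
    then have "a^2 = b^2" unfolding U_def by (simp add: eq_neg_iff_add_eq_0[symmetric])
    then show ?thesis using ha hb by linarith
  qed (simp add: pq)
qed

section \<open>The system \<open>r\<^sup>2 + s\<^sup>2 = a\<^sup>2\<close>, \<open>r\<^sup>2 - 2s\<^sup>2 = b\<^sup>2\<close>\<close>

definition sum_and_diff_squares :: "int \<Rightarrow> int \<Rightarrow> bool" where
  "sum_and_diff_squares r s \<longleftrightarrow> (\<exists>a b. r^2 + s^2 = a^2 \<and> r^2 - 2*s^2 = b^2)"

lemma sum_and_diff_squares_imp_even:
  fixes r s :: int
  assumes "sum_and_diff_squares r s"
  shows "even s"
proof -
  obtain a b where "r^2 + s^2 = a^2" "r^2 - 2*s^2 = b^2"
    using assms unfolding sum_and_diff_squares_def by blast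
  then have "s^2 mod 8 \<noteq> 1"
    by (intro binary_forms_squares_mod_8[where a=1 and b=1 and c=1 and d="-2" and x=r and y=s
          and z=a and t=b and P="\<lambda>X Y. Y \<noteq> 1"]) simp_all
  then show ?thesis using odd_iff_square_mod_8 by blast
qed

lemma coprime_sum_and_diff_square_roots:
  fixes r s a b :: int
  assumes cp: "coprime r s" and ha: "r^2 + s^2 = a^2" and hb: "r^2 - 2*s^2 = b^2"
  shows "coprime a b"
proof (rule coprimeI_prime_dvd)
  fix p :: int assume p: "prime p" "p dvd a" "p dvd b"
  then have "p dvd a^2" "p dvd b^2" by (simp_all add: power2_eq_square)
  moreover have "3*s^2 = a^2 - b^2" "3*r^2 = 2*a^2 + b^2" using ha hb by linarith+
  ultimately have "p dvd 3*s^2" "p dvd 3*r^2" by simp_all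
  show False
  proof (cases "p = 3")
    case True
    then have "3 dvd r^2 + s^2" using \<open>p dvd a^2\<close> ha by simp
    then have "3 dvd r" "3 dvd s" by (rule three_dvd_sum_squares)+
    then show False using cp coprime_no_common_prime_divisor[of r s 3] by simp
  next
    case False
    then have "\<not> p dvd 3" using p(1) primes_dvd_imp_eq[of p 3] by auto
    then have "p dvd s" "p dvd r"
      using prime_dvd_mult_powerD[OF p(1)] \<open>p dvd 3*s^2\<close> \<open>p dvd 3*r^2\<close> by blast+
    then show False using p(1) cp coprime_no_common_prime_divisor by blast
  qed
qed

lemma sum_and_diff_squares_first_factorization:
  fixes r s k a b :: int
  assumes cp: "coprime r s" and sk: "s = 2*k" and k0: "k \<noteq> 0"
    and ha: "r^2 + s^2 = a^2" and hb: "r^2 - 2*s^2 = b^2"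
  shows "\<exists>m n. coprime m n \<and> \<not> 3 dvd n \<and> \<bar>a\<bar> = 3*m^2 + n^2 \<and> k^2 = m^2*n^2"
proof -
  have "odd r" using cp sk coprime_common_divisor_int[of r s 2] by auto
  then have "odd (r^2 + s^2)" "odd (r^2 - 2*s^2)" using sk by simp_all
  then have oa: "odd \<bar>a\<bar>" and ob: "odd \<bar>b\<bar>" unfolding ha hb by simp_all
  have d1: "\<bar>a\<bar>^2 - \<bar>b\<bar>^2 = 3*s^2" using ha hb by simp
  have "s^2 > 0" using sk k0 by simp
  moreover have "\<bar>a\<bar>^2 = a^2" "\<bar>b\<bar>^2 = b^2" by simp_all
  ultimately have "b^2 < a^2" using d1 by linarith
  then have ab: "\<bar>b\<bar> < \<bar>a\<bar>" by (simp add: abs_less_square_iff)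
  have cab: "coprime \<bar>a\<bar> \<bar>b\<bar>" using coprime_sum_and_diff_square_roots[OF cp ha hb] by simp
  obtain A B where A: "\<bar>a\<bar> + \<bar>b\<bar> = 2*A" and B: "\<bar>a\<bar> - \<bar>b\<bar> = 2*B"
    using oa ob by (meson evenE odd_add even_diff)
  have "A > 0" "B > 0" using A B ab by linarith+
  moreover have "A * B = 3*k^2"
  proof -
    have "(2*A)*(2*B) = 4*(3*k^2)" unfolding A[symmetric] B[symmetric] using d1 sk by algebra
    then show ?thesis by simp
  qed
  moreover have "coprime A B"
  proof (rule coprimeI_prime_dvd)
    fix p :: int assume p: "prime p" "p dvd A" "p dvd B"
    have "\<bar>a\<bar> = A + B" "\<bar>b\<bar> = A - B" using A B by linarith+
    then have "p dvd \<bar>a\<bar>" "p dvd \<bar>b\<bar>" using p by simp_all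
    then show False using p(1) cab coprime_no_common_prime_divisor by blast
  qed
  ultimately obtain m n where "coprime m n" "\<not> 3 dvd n" "A + B = 3*m^2 + n^2" "k^2 = m^2*n^2"
    using coprime_mult_eq_three_times_square by blast
  moreover have "\<bar>a\<bar> = A + B" using A B by linarith
  ultimately show ?thesis by auto
qed

lemma square_plus_8_fourth_power_factorization:
  fixes m n R :: int
  assumes cmn: "coprime m n" and m0: "m \<noteq> 0" and oP: "odd (m^2 + n^2)"
    and R0: "R \<ge> 0" and hR: "R^2 = (m^2 + n^2)^2 + 8*m^4"
  shows "\<exists>\<alpha> \<beta>. \<alpha> > 0 \<and> \<beta> > 0 \<and> coprime \<alpha> \<beta> \<and> \<alpha> * \<beta> = 2*m^4 \<and> m^2 + n^2 = \<beta> - \<alpha>"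
proof -
  define P where "P = m^2 + n^2"
  have "odd (R^2)" using oP hR unfolding P_def by simp
  then have oR: "odd R" by simp
  have "P^2 < R^2" "P \<ge> 0" using hR m0 unfolding P_def by simp_all
  then have PR: "P < R" using R0 by (simp add: abs_less_square_iff[symmetric])
  obtain \<alpha> \<beta> where h\<alpha>: "R - P = 2*\<alpha>" and h\<beta>: "R + P = 2*\<beta>"
    using oR oP unfolding P_def by (meson evenE odd_add even_diff)
  have "\<alpha> > 0" "\<beta> > 0" using h\<alpha> h\<beta> PR \<open>P \<ge> 0\<close> by linarith+
  moreover have "(2*\<alpha>)*(2*\<beta>) = 4*(2*m^4)"
    unfolding h\<alpha>[symmetric] h\<beta>[symmetric] using hR unfolding P_def by algebra
  then have \<alpha>\<beta>: "\<alpha> * \<beta> = 2*m^4" by simp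
  moreover have P\<alpha>\<beta>: "P = \<beta> - \<alpha>" using h\<alpha> h\<beta> by linarith
  moreover have "coprime \<alpha> \<beta>"
  proof (rule coprimeI_prime_dvd)
    fix p :: int assume p: "prime p" "p dvd \<alpha>" "p dvd \<beta>"
    then have pP: "p dvd P" unfolding P\<alpha>\<beta> by simp
    have "p dvd 2 * m^4" using p \<alpha>\<beta> by (metis dvd_mult2)
    then have "p dvd 2 \<or> p dvd m" using prime_dvd_mult_powerD[OF p(1)] by blast
    then show False
    proof
      assume "p dvd 2"
      then have "p = 2" using p(1) by (simp add: primes_dvd_imp_eq)
      then show False using pP oP unfolding P_def by simp
    next
      assume pm: "p dvd m"
      then have "p dvd P - m^2" using pP by (simp add: power2_eq_square)
      then have "p dvd n" using p(1) prime_dvd_power unfolding P_def by auto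
      then show False using pm p(1) cmn coprime_no_common_prime_divisor by blast
    qed
  qed
  ultimately show ?thesis unfolding P_def by blast
qed

lemma square_ne_2M4_minus_M2N2_minus_N4:
  fixes M N n :: int
  assumes cNM: "coprime N M" and n3: "\<not> 3 dvd n" and N0: "N \<noteq> 0"
  shows "n^2 \<noteq> 2*M^4 - N^2*M^2 - N^4"
proof
  assume h: "n^2 = 2*M^4 - N^2*M^2 - N^4"
  define f g where "f = 2*M^2 + N^2" and "g = M^2 - N^2"
  have fg: "g * f = n^2" unfolding f_def g_def h by algebra
  have "coprime g f"
  proof (rule coprimeI_dvd_three_squares[OF cNM])
    show "\<not> 3 dvd g * f" using fg n3 by (simp add: prime_dvd_power_iff)
    fix p assume "p dvd g" "p dvd f"
    then have "p dvd f - 2*g" "p dvd f + g" by simp_all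
    moreover have "f - 2*g = 3*N^2" "f + g = 3*M^2" unfolding f_def g_def by simp_all
    ultimately show "p dvd 3*N^2 \<and> p dvd 3*M^2" by simp
  qed
  moreover have "f > 0" using N0 unfolding f_def by (auto intro: add_nonneg_pos)
  ultimately obtain d c where "g = d^2" "f = c^2" using coprime_mult_eq_square_pos fg by blast
  then have "even M \<and> even N" using twice_sum_and_diff_squares_even unfolding f_def g_def by metis
  then show False using cNM coprime_no_common_prime_divisor[of N M 2] by auto
qed

lemma square_quartic_form_imp_sum_and_diff_squares:
  fixes M N n :: int
  assumes cMN: "coprime M N" and n3: "\<not> 3 dvd n" and N0: "N \<noteq> 0"
    and h: "n^2 = N^4 - M^2*N^2 - 2*M^4"
  shows "sum_and_diff_squares N M"
proof -
  define f g where "f = N^2 - 2*M^2" and "g = N^2 + M^2"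
  have fg: "f * g = n^2" unfolding f_def g_def h by algebra
  have "coprime f g"
  proof (rule coprimeI_dvd_three_squares[OF cMN])
    show "\<not> 3 dvd f * g" using fg n3 by (simp add: prime_dvd_power_iff)
    fix p assume "p dvd f" "p dvd g"
    then have "p dvd g - f" "p dvd f + 2*g" by simp_all
    moreover have "g - f = 3*M^2" "f + 2*g = 3*N^2" unfolding f_def g_def by simp_all
    ultimately show "p dvd 3*M^2 \<and> p dvd 3*N^2" by simp
  qed
  moreover have "g > 0" using N0 unfolding g_def by (simp add: add_pos_nonneg)
  ultimately obtain b a where "f = b^2" "g = a^2" using coprime_mult_eq_square_pos fg by blast
  then show ?thesis unfolding sum_and_diff_squares_def f_def g_def by auto
qed

lemma sum_and_diff_squares_second_step:
  fixes m n R :: int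
  assumes cmn: "coprime m n" and n3: "\<not> 3 dvd n" and m0: "m \<noteq> 0" and oP: "odd (m^2 + n^2)"
    and R0: "R \<ge> 0" and hR: "R^2 = (m^2 + n^2)^2 + 8*m^4"
  shows "\<exists>r' s'. coprime r' s' \<and> s' \<noteq> 0 \<and> s'^2 \<le> m^2 \<and> sum_and_diff_squares r' s'"
proof -
  obtain \<alpha> \<beta> where \<alpha>0: "\<alpha> > 0" and \<beta>0: "\<beta> > 0" and c\<alpha>\<beta>: "coprime \<alpha> \<beta>"
    and \<alpha>\<beta>: "\<alpha> * \<beta> = 2*m^4" and P\<alpha>\<beta>: "m^2 + n^2 = \<beta> - \<alpha>"
    using square_plus_8_fourth_power_factorization[OF cmn m0 oP R0 hR] by blast
  have "2 dvd \<alpha> * \<beta>" using \<alpha>\<beta> by simp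
  then have "2 dvd \<alpha> \<or> 2 dvd \<beta>" by (simp add: prime_dvd_mult_iff)
  then show ?thesis
  proof
    assume "2 dvd \<beta>"
    then obtain G where G: "\<beta> = 2*G" by blast
    obtain N M where NM: "\<alpha> = N^4" "G = M^4" "m^2 = N^2*M^2" and cNM: "coprime N M"
      using coprime_mult_eq_fourth_power[of \<alpha> G m] c\<alpha>\<beta> \<alpha>\<beta> \<alpha>0 \<beta>0 G by auto
    have "n^2 = 2*M^4 - N^2*M^2 - N^4" using P\<alpha>\<beta> NM G by algebra
    moreover have "N \<noteq> 0" using NM \<alpha>0 by auto
    ultimately show ?thesis using square_ne_2M4_minus_M2N2_minus_N4[OF cNM n3] by blast
  next
    assume "2 dvd \<alpha>"
    then obtain G where G: "\<alpha> = 2*G" by blast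
    obtain M N where MN: "G = M^4" "\<beta> = N^4" "m^2 = M^2*N^2" and cMN: "coprime M N"
      using coprime_mult_eq_fourth_power[of G \<beta> m] c\<alpha>\<beta> \<alpha>\<beta> \<alpha>0 \<beta>0 G by auto
    have N0: "N \<noteq> 0" using MN \<beta>0 by auto
    have "n^2 = N^4 - M^2*N^2 - 2*M^4" using P\<alpha>\<beta> MN G by algebra
    then have "sum_and_diff_squares N M" using square_quartic_form_imp_sum_and_diff_squares[OF cMN n3 N0] by blast
    moreover have "M \<noteq> 0" using MN m0 by auto
    moreover have "M^2 \<le> m^2"
    proof -
      have "M^2 * 1 \<le> M^2 * N^2" using N0 by (intro mult_left_mono) (auto simp: int_one_le_iff_zero_less)
      then show ?thesis using MN by simp
    qed
    ultimately show ?thesis using cMN by (metis coprime_commute)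
  qed
qed

lemma sum_and_diff_squares_descent:
  fixes r s :: int
  assumes cp: "coprime r s" and s0: "s \<noteq> 0" and sq: "sum_and_diff_squares r s"
  shows "\<exists>r' s'. coprime r' s' \<and> s' \<noteq> 0 \<and> \<bar>s'\<bar> < \<bar>s\<bar> \<and> sum_and_diff_squares r' s'"
proof -
  obtain a b where ha: "r^2 + s^2 = a^2" and hb: "r^2 - 2*s^2 = b^2"
    using sq unfolding sum_and_diff_squares_def by blast
  obtain k where sk: "s = 2*k" using sum_and_diff_squares_imp_even[OF sq] by blast
  have k0: "k \<noteq> 0" using s0 sk by simp
  obtain m n where cmn: "coprime m n" and n3: "\<not> 3 dvd n"
    and amn: "\<bar>a\<bar> = 3*m^2 + n^2" and kmn: "k^2 = m^2*n^2"
    using sum_and_diff_squares_first_factorization[OF cp sk k0 ha hb] by blast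
  have m0: "m \<noteq> 0" and n0: "n \<noteq> 0" using kmn k0 by auto
  have "odd r" using cp sk coprime_common_divisor_int[of r s 2] by auto
  then have "odd (r^2 + s^2)" using sk by simp
  then have "odd \<bar>a\<bar>" unfolding ha by simp
  then have "odd (m^2 + n^2)" unfolding amn by simp
  moreover have "\<bar>r\<bar>^2 = (m^2 + n^2)^2 + 8*m^4"
  proof -
    have "\<bar>r\<bar>^2 = \<bar>a\<bar>^2 - 4*k^2" using ha sk by (simp add: power_mult_distrib)
    then show ?thesis unfolding amn kmn by algebra
  qed
  ultimately obtain r' s' where new: "coprime r' s'" "s' \<noteq> 0" "sum_and_diff_squares r' s'"
    and "s'^2 \<le> m^2"
    using sum_and_diff_squares_second_step[OF cmn n3 m0] abs_ge_zero by blast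
  moreover have "m^2 \<le> k^2"
  proof -
    have "m^2 * 1 \<le> m^2 * n^2" using n0 by (intro mult_left_mono) (auto simp: int_one_le_iff_zero_less)
    then show ?thesis using kmn by simp
  qed
  moreover have "k^2 < s^2" using sk k0 by (simp add: power_mult_distrib)
  ultimately have "\<bar>s'\<bar> < \<bar>s\<bar>" by (simp add: abs_less_square_iff)
  then show ?thesis using new by blast
qed

theorem coprime_sum_and_diff_squares_imp_zero:
  fixes r s :: int
  assumes "coprime r s" "sum_and_diff_squares r s"
  shows "s = 0"
  using assms
proof (induction "nat \<bar>s\<bar>" arbitrary: r s rule: less_induct)
  case less
  show ?case
  proof (rule ccontr)
    assume "s \<noteq> 0"
    then obtain r' s' where "coprime r' s'" "sum_and_diff_squares r' s'" "s' \<noteq> 0" "\<bar>s'\<bar> < \<bar>s\<bar>"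
      using sum_and_diff_squares_descent less.prems by blast
    then show False using less.hyps by (metis nat_less_eq_zless abs_ge_zero)
  qed
qed

section \<open>Square classes of the elements of \<open>S\<close>\<close>

lemma u_of_plus_v_of: "u_of r s + v_of r s = 3*r^2"
  unfolding u_of_def v_of_def by simp

lemma u_of_minus_v_of: "u_of r s - v_of r s = v_of s r"
  unfolding u_of_def v_of_def by simp

lemma coprime_u_of_pos:
  assumes "coprime r s"
  shows "u_of r s > 0"
proof -
  have "r \<noteq> 0 \<or> s \<noteq> 0" using assms by auto
  then show ?thesis unfolding u_of_def by (auto simp: add_pos_nonneg add_nonneg_pos)
qed

lemma coprime_not_three_dvd_u_of:
  assumes "coprime r s"
  shows "\<not> 3 dvd u_of r s"
proof
  assume "3 dvd u_of r s"
  then have "3 dvd r" "3 dvd s" unfolding u_of_def by (rule three_dvd_sum_squares)+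
  then show False using assms coprime_no_common_prime_divisor[of r s 3] by simp
qed

lemma coprime_not_three_dvd_v_of:
  assumes "coprime r s"
  shows "\<not> 3 dvd v_of r s"
proof
  assume "3 dvd v_of r s"
  then have "3 dvd 3*r^2 - v_of r s" by (rule dvd_diff[OF dvd_triv_left])
  then show False using coprime_not_three_dvd_u_of[OF assms] u_of_plus_v_of[of r s]
    by (simp add: eq_diff_eq[symmetric])
qed

lemma coprime_v_of_nonzero:
  assumes "coprime r s"
  shows "v_of r s \<noteq> 0"
proof
  assume "v_of r s = 0"
  then have "s^2 = 2*r^2" unfolding v_of_def by simp
  then have "even s" by (metis dvd_triv_left even_power pos2)
  then obtain t where "s = 2*t" by blast
  then have "r^2 = 2*t^2" using \<open>s^2 = 2*r^2\<close> by (simp add: power_mult_distrib)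
  then have "even r" by (metis dvd_triv_left even_power pos2)
  then show False using coprime_not_both_even[OF assms] \<open>even s\<close> by blast
qed

lemma coprime_u_of_v_of_swap:
  assumes "coprime r s"
  shows "coprime (u_of r s) (v_of s r)"
proof (rule coprimeI_dvd_three_squares[OF assms])
  show "\<not> 3 dvd u_of r s * v_of s r"
    using coprime_not_three_dvd_u_of[OF assms] coprime_not_three_dvd_v_of assms
    by (simp add: prime_dvd_mult_iff coprime_commute)
  fix p assume pu: "p dvd u_of r s" and pv: "p dvd v_of s r"
  have "p dvd 2 * u_of r s - v_of s r" "p dvd u_of r s + v_of s r"
    by (intro dvd_diff dvd_add dvd_mult pu pv)+
  moreover have "2 * u_of r s - v_of s r = 3*r^2" "u_of r s + v_of s r = 3*s^2"
    unfolding u_of_def v_of_def by simp_all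
  ultimately show "p dvd 3*r^2 \<and> p dvd 3*s^2" by simp
qed

lemma coprime_v_of_v_of_swap:
  assumes "coprime r s"
  shows "coprime (v_of r s) (v_of s r)"
proof (rule coprimeI_dvd_three_squares[OF assms])
  show "\<not> 3 dvd v_of r s * v_of s r"
    using coprime_not_three_dvd_v_of assms by (simp add: prime_dvd_mult_iff coprime_commute)
  fix p assume pv: "p dvd v_of r s" and pv': "p dvd v_of s r"
  have "p dvd 2 * v_of r s + v_of s r" "p dvd v_of r s + 2 * v_of s r"
    by (intro dvd_add dvd_mult pv pv')+
  moreover have "2 * v_of r s + v_of s r = 3*r^2" "v_of r s + 2 * v_of s r = 3*s^2"
    unfolding v_of_def by simp_all
  ultimately show "p dvd 3*r^2 \<and> p dvd 3*s^2" by simp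
qed

lemma abs_u_of_mult_v_of_swap_square_imp:
  assumes cp: "coprime r s" and h: "\<bar>u_of r s * v_of s r\<bar> = j^2"
  shows "s = 0"
proof -
  obtain a b where a: "\<bar>u_of r s\<bar> = a^2" and b: "\<bar>v_of s r\<bar> = b^2"
    using coprime_abs_mult_eq_square[OF coprime_u_of_v_of_swap[OF cp] h] by blast
  have ha: "r^2 + s^2 = a^2" using a coprime_u_of_pos[OF cp] unfolding u_of_def by simp
  show ?thesis
  proof (cases "v_of s r \<ge> 0")
    case True
    then have "2*s^2 - r^2 = b^2" using b unfolding v_of_def by simp
    then have "even r \<and> even s" using sum_and_twice_diff_squares_even ha by blast
    then show ?thesis using coprime_not_both_even[OF cp] by blast
  next
    case False
    then have "r^2 - 2*s^2 = b^2" using b unfolding v_of_def by simp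
    then have "sum_and_diff_squares r s" using ha unfolding sum_and_diff_squares_def by blast
    then show ?thesis using coprime_sum_and_diff_squares_imp_zero[OF cp] by blast
  qed
qed

lemma abs_v_of_mult_v_of_swap_square_imp:
  assumes cp: "coprime r s" and h: "\<bar>v_of r s * v_of s r\<bar> = j^2"
  shows "r^2 = s^2"
proof -
  have cp': "coprime s r" using cp by (simp add: coprime_commute)
  obtain a b where a: "\<bar>v_of r s\<bar> = a^2" and b: "\<bar>v_of s r\<bar> = b^2"
    using coprime_abs_mult_eq_square[OF coprime_v_of_v_of_swap[OF cp] h] by blast
  have "v_of r s \<noteq> 0" "v_of s r \<noteq> 0"
    using coprime_v_of_nonzero[OF cp] coprime_v_of_nonzero[OF cp'] by simp_all
  then consider "v_of r s > 0" "v_of s r > 0" | "v_of r s > 0" "v_of s r < 0"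
    | "v_of r s < 0" "v_of s r > 0" | "v_of r s < 0" "v_of s r < 0"
    by linarith
  then show ?thesis
  proof cases
    case 1
    then show ?thesis using twice_diff_squares_pair_imp_eq a b unfolding v_of_def by simp
  next
    case 2
    then have "even r \<and> even s"
      using twice_diff_and_diff_twice_squares_even[of r s a b] a b unfolding v_of_def by simp
    then show ?thesis using coprime_not_both_even[OF cp] by blast
  next
    case 3
    then have "even s \<and> even r"
      using twice_diff_and_diff_twice_squares_even[of s r b a] a b unfolding v_of_def by simp
    then show ?thesis using coprime_not_both_even[OF cp] by blast
  next
    case 4
    then show ?thesis using zero_le_power2[of r] unfolding v_of_def by linarith
  qed
qed

lemma square_class_cases:
  fixes u v r X Y k :: int
  assumes uv: "u + v = 3*r^2" and r0: "r \<noteq> 0" and nz: "u * v * (u - v) \<noteq> 0"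
    and X: "X \<in> {u*(u+v), u*(u-v), v*(u+v), v*(u-v)}" and Y: "Y \<in> {1, u*v*(u^2 - v^2)}"
    and sq: "\<bar>X * Y\<bar> = k^2"
  shows "\<exists>j. \<bar>3*u\<bar> = j^2 \<or> \<bar>3*v\<bar> = j^2 \<or> \<bar>u*(u-v)\<bar> = j^2 \<or> \<bar>v*(u-v)\<bar> = j^2"
proof -
  have reduce: "\<exists>j. \<bar>D\<bar> = j^2" if "c \<noteq> 0" "X * Y = c^2 * D" for c D
    using abs_mult_square_cancel[OF that(1)] sq unfolding that(2) by blast
  have v: "v = 3*r^2 - u" using uv by simp
  have "u \<noteq> 0" "v \<noteq> 0" "u - v \<noteq> 0" using nz by auto
  from Y X show ?thesis
  proof (elim insertE emptyE)
    assume "Y = 1" "X = u*(u+v)"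
    then have "X * Y = r^2 * (3*u)" unfolding v by algebra
    then show ?thesis using reduce r0 by blast
  next
    assume "Y = 1" "X = u*(u-v)"
    then show ?thesis using reduce[of 1 "u*(u-v)"] by auto
  next
    assume "Y = 1" "X = v*(u+v)"
    then have "X * Y = r^2 * (3*v)" unfolding v by algebra
    then show ?thesis using reduce r0 by blast
  next
    assume "Y = 1" "X = v*(u-v)"
    then show ?thesis using reduce[of 1 "v*(u-v)"] by auto
  next
    assume "Y = u*v*(u^2 - v^2)" "X = u*(u+v)"
    then have "X * Y = (u*(u+v))^2 * (v*(u-v))" by algebra
    moreover have "u*(u+v) \<noteq> 0" using \<open>u \<noteq> 0\<close> uv r0 by simp
    ultimately show ?thesis using reduce by blast
  next
    assume "Y = u*v*(u^2 - v^2)" "X = u*(u-v)"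
    then have "X * Y = (u*(u-v)*r)^2 * (3*v)" unfolding v by algebra
    moreover have "u*(u-v)*r \<noteq> 0" using \<open>u \<noteq> 0\<close> \<open>u - v \<noteq> 0\<close> r0 by simp
    ultimately show ?thesis using reduce by blast
  next
    assume "Y = u*v*(u^2 - v^2)" "X = v*(u+v)"
    then have "X * Y = (v*(u+v))^2 * (u*(u-v))" by algebra
    moreover have "v*(u+v) \<noteq> 0" using \<open>v \<noteq> 0\<close> uv r0 by simp
    ultimately show ?thesis using reduce by blast
  next
    assume "Y = u*v*(u^2 - v^2)" "X = v*(u-v)"
    then have "X * Y = (v*(u-v)*r)^2 * (3*u)" unfolding v by algebra
    moreover have "v*(u-v)*r \<noteq> 0" using \<open>v \<noteq> 0\<close> \<open>u - v \<noteq> 0\<close> r0 by simp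
    ultimately show ?thesis using reduce by blast
  qed
qed

lemma abs_mem_signed_four:
  fixes x a b c d :: int
  assumes "x \<in> {a, -a, b, -b, c, -c, d, -d}"
  shows "\<exists>X\<in>{a, b, c, d}. \<bar>x\<bar> = \<bar>X\<bar>"
  using assms by auto

lemma abs_mem_signed_two:
  fixes y a :: int
  assumes "y \<in> {1, -1, a, -a}"
  shows "\<exists>Y\<in>{1, a}. \<bar>y\<bar> = \<bar>Y\<bar>"
  using assms by auto

lemma same_sq_class_of_int_imp_square:
  fixes x y :: int
  assumes "same_sq_class (of_int x) (of_int y)"
  shows "\<exists>k. x * y = k^2"
proof -
  from assms obtain q :: rat where y0: "y \<noteq> 0" and q: "of_int x / of_int y = q^2"
    unfolding same_sq_class_def by auto
  have "(of_int x :: rat) = q^2 * of_int y" using q y0 by (simp add: divide_eq_eq)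
  then have "(of_int (x*y) :: rat) = (q * of_int y)^2" by (simp add: power_mult_distrib power2_eq_square)
  then show ?thesis by (rule square_of_rat_square)
qed

lemma square_class_coincidence_imp:
  fixes r s x y :: int
  assumes cp: "coprime r s" and r0: "r \<noteq> 0" and x: "x \<in> S_of r s"
    and y: "y \<in> {1, -1, A_of r s, - A_of r s}" and sc: "same_sq_class (of_int x) (of_int y)"
  shows "s = 0 \<or> r^2 = s^2"
proof -
  define u v where "u = u_of r s" and "v = v_of r s"
  have uv: "u + v = 3*r^2" "u - v = v_of s r"
    unfolding u_def v_def by (rule u_of_plus_v_of u_of_minus_v_of)+
  have nz: "u * v * (u - v) \<noteq> 0" unfolding uv(2) unfolding u_def v_def
    using coprime_u_of_pos[OF cp] coprime_v_of_nonzero[OF cp] coprime_v_of_nonzero[of s r] cp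
    by (simp add: coprime_commute)
  obtain X where X: "X \<in> {u*(u+v), u*(u-v), v*(u+v), v*(u-v)}" "\<bar>x\<bar> = \<bar>X\<bar>"
    using abs_mem_signed_four x unfolding S_of_def Let_def u_def[symmetric] v_def[symmetric] by blast
  obtain Y where Y: "Y \<in> {1, u*v*(u^2 - v^2)}" "\<bar>y\<bar> = \<bar>Y\<bar>"
    using abs_mem_signed_two y unfolding A_of_def u_def[symmetric] v_def[symmetric] by blast
  obtain k where "x * y = k^2" using same_sq_class_of_int_imp_square[OF sc] by blast
  then have "\<bar>x\<bar> * \<bar>y\<bar> = k^2" by (simp add: abs_mult[symmetric])
  then have "\<bar>X * Y\<bar> = k^2" unfolding abs_mult X(2) Y(2) .
  then obtain j where "\<bar>3*u\<bar> = j^2 \<or> \<bar>3*v\<bar> = j^2 \<or> \<bar>u*(u-v)\<bar> = j^2 \<or> \<bar>v*(u-v)\<bar> = j^2"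
    using square_class_cases[OF uv(1) r0 nz X(1) Y(1)] by blast
  then show ?thesis
  proof (elim disjE)
    assume "\<bar>3*u\<bar> = j^2"
    then show ?thesis using abs_three_mult_neq_square coprime_not_three_dvd_u_of[OF cp]
      unfolding u_def by blast
  next
    assume "\<bar>3*v\<bar> = j^2"
    then show ?thesis using abs_three_mult_neq_square coprime_not_three_dvd_v_of[OF cp]
      unfolding v_def by blast
  next
    assume "\<bar>u*(u-v)\<bar> = j^2"
    then show ?thesis using abs_u_of_mult_v_of_swap_square_imp[OF cp] unfolding uv(2) unfolding u_def by blast
  next
    assume "\<bar>v*(u-v)\<bar> = j^2"
    then show ?thesis using abs_v_of_mult_v_of_swap_square_imp[OF cp] unfolding uv(2) unfolding v_def by blast
  qed
qed

lemma coprime_trivial_pairs: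
  fixes r s :: int
  assumes "coprime r s" "s = 0 \<or> r^2 = s^2"
  shows "(r, s) \<in> {-1, 1} \<times> {-1, 0, 1}"
proof -
  have "s = 0 \<or> s = r \<or> s = - r" using assms(2) by (auto simp: power2_eq_iff)
  then have "coprime r r \<and> (s = 0 \<or> s = r \<or> s = - r)" using assms(1) by auto
  then show ?thesis by auto
qed

theorem lemma6p3:
  shows "finite {(r :: int, s :: int). coprime r s \<and> r \<noteq> 0 \<and>
            (\<exists>x \<in> S_of r s. \<exists>y \<in> {1, -1, A_of r s, - A_of r s}.
               same_sq_class (of_int x) (of_int y))}"
proof (rule finite_subset[of _ "{-1, 1} \<times> {-1, 0, 1}"])
  show "finite ({-1, 1} \<times> {-1, 0, 1 :: int})" by simp
qed (use square_class_coincidence_imp coprime_trivial_pairs in blast)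

end
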